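(* Let $N\geqslant 1$. The map $\mathfrak{s}:\Lambda(N)\to\mathcal{S}(N)$, $(\mu,\nu)\mapsto[\mu+\bar{\nu},\nu_{1}]$, is a bijection.
   Context: A partition $\alpha=(\alpha_1\geqslant\alpha_2\geqslant\dots\geqslant\alpha_p>0)$ has length $\ell(\alpha)=p$; the empty partition $\varnothing$ has length $0$; set $\alpha_i=0$ for $i>\ell(\alpha)$, and for partitions $\alpha,\beta$ let $\alpha+\beta$ be the partition with parts $\alpha_i+\beta_i$. $\alpha'$ denotes the conjugate (transposed) partition. $\mathcal{P}(N)$ is the set of partitions with at most $N$ parts, and $\Lambda(N)$ is the set of pairs $(\mu,\nu)$ of partitions with $\ell(\mu)+\ell(\nu)\leqslant N$. $\mathcal{S}(N)$ is the set of equivalence classes $[\alpha,t]$ of $\mathcal{P}(N)\times\mathbb{Z}_{\geqslant 0}$ under the relation $(\alpha,t)\sim(\beta,u)$ iff $t-u=\alpha_i-\beta_i$ for all $i=1,\dots,N$. For nonempty $\beta\in\mathcal{P}(N)$ with $q=\ell(\beta')=\beta_1$, define $\bar\beta=(N-\beta'_q,\dots,N-\beta'_1)'$ (zero entries discarded), i.e. the complement of $\beta$ in the $N\times q$ rectangle rotated by $180^\circ$; set $\bar\varnothing=\varnothing$. *)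

theory Defs
  imports Main
begin

definition is_partition :: "nat list \<Rightarrow> bool" where
  "is_partition xs \<longleftrightarrow> sorted_wrt (\<ge>) xs \<and> 0 \<notin> set xs"

text \<open>The i-th part (1-indexed), zero beyond the length.\<close>
definition part :: "nat list \<Rightarrow> nat \<Rightarrow> nat" where
  "part xs i = (if 1 \<le> i \<and> i \<le> length xs then xs ! (i - 1) else 0)"

definition conj :: "nat list \<Rightarrow> nat list" where
  "conj xs = map (\<lambda>i. length (filter (\<lambda>a. i \<le> a) xs)) [1..<part xs 1 + 1]"

definition padd :: "nat list \<Rightarrow> nat list \<Rightarrow> nat list" where
  "padd a b = map (\<lambda>i. part a i + part b i) [1..<max (length a) (length b) + 1]"

definition parts_le :: "nat \<Rightarrow> nat list set" where
  "parts_le N = {a. is_partition a \<and> length a \<le> N}"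

definition Lambda :: "nat \<Rightarrow> (nat list \<times> nat list) set" where
  "Lambda N = {(m, n). is_partition m \<and> is_partition n \<and> length m + length n \<le> N}"

definition srel :: "nat \<Rightarrow> ((nat list \<times> nat) \<times> (nat list \<times> nat)) set" where
  "srel N = {((a, t), (b, u)). a \<in> parts_le N \<and> b \<in> parts_le N \<and>
      (\<forall>i\<in>{1..N}. int t - int u = int (part a i) - int (part b i))}"

definition Sset :: "nat \<Rightarrow> (nat list \<times> nat) set set" where
  "Sset N = (parts_le N \<times> UNIV) // srel N"

definition sclass :: "nat \<Rightarrow> nat list \<Rightarrow> nat \<Rightarrow> (nat list \<times> nat) set" where
  "sclass N a t = srel N `` {(a, t)}"

definition pbar :: "nat \<Rightarrow> nat list \<Rightarrow> nat list" where
  "pbar N b = (if b = [] then [] else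
      conj (filter (\<lambda>x. x \<noteq> 0) (map (\<lambda>x. N - x) (rev (conj b)))))"

definition frak_s :: "nat \<Rightarrow> nat list \<times> nat list \<Rightarrow> (nat list \<times> nat) set" where
  "frak_s N = (\<lambda>(m, n). sclass N (padd m (pbar N n)) (part n 1))"

end

theory Submission
  imports Defs
begin

(* The class [\<alpha>, t] is determined by the integer vector (\<alpha>_i - t) for i = 1..N.
   Since bar \<nu>_i = \<nu>_1 - \<nu>_(N+1-i), the vector of s(\<mu>, \<nu>) is i \<mapsto> \<mu>_i - \<nu>_(N+1-i).
   The condition l(\<mu>) + l(\<nu>) \<le> N says exactly that \<mu>_i and \<nu>_(N+1-i) are never both
   nonzero, so \<mu> and the reversed \<nu> are recovered as the positive and negative parts of
   the vector. Conversely, as \<alpha> is nonincreasing, the positive and negative parts of any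
   (\<alpha>_i - t) are partitions, which gives a preimage of [\<alpha>, t]. *)

lemma part_nth: "1 \<le> i \<Longrightarrow> i \<le> length xs \<Longrightarrow> part xs i = xs ! (i - 1)"
  by (simp add: part_def)

lemma part_beyond: "length xs < i \<Longrightarrow> part xs i = 0"
  by (simp add: part_def)

lemma part_0 [simp]: "part xs 0 = 0"
  by (simp add: part_def)

lemma part_Nil [simp]: "part [] i = 0"
  by (simp add: part_def)

lemma part_Cons: "part (x # xs) i = (if i = 0 then 0 else if i = 1 then x else part xs (i - 1))"
  by (cases i) (auto simp: part_def nth_Cons')

lemma part_antimono:
  assumes "is_partition xs" "1 \<le> i" "i \<le> j"
  shows "part xs j \<le> part xs i"
proof (cases "j \<le> length xs")
  case True
  have "sorted_wrt (\<ge>) xs" using assms(1) by (simp add: is_partition_def)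
  then have "xs ! (j - 1) \<le> xs ! (i - 1)"
    using True assms(2,3) by (cases "i = j") (auto simp: sorted_wrt_iff_nth_less)
  then show ?thesis using True assms(2,3) by (simp add: part_nth)
qed (simp add: part_beyond)

lemma part_eq_0_iff:
  assumes "is_partition xs"
  shows "part xs i = 0 \<longleftrightarrow> i = 0 \<or> length xs < i"
proof -
  have "xs ! (i - 1) \<in> set xs" if "1 \<le> i" "i \<le> length xs"
    using that by simp
  then have "xs ! (i - 1) \<noteq> 0" if "1 \<le> i" "i \<le> length xs"
    using assms that by (metis is_partition_def)
  then show ?thesis by (auto simp: part_def)
qed

lemma part_le_part_1:
  assumes "is_partition xs" "a \<in> set xs"
  shows "a \<le> part xs 1"
proof -
  obtain k where "k < length xs" "xs ! k = a"
    using assms(2) by (auto simp: in_set_conv_nth)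
  then have "part xs (k + 1) = a" by (simp add: part_nth)
  then show ?thesis using part_antimono[OF assms(1), of 1 "k + 1"] by simp
qed

lemma partition_eqI:
  assumes "is_partition a" "is_partition b" "length a \<le> N" "length b \<le> N"
    and parts: "\<And>i. 1 \<le> i \<Longrightarrow> i \<le> N \<Longrightarrow> part a i = part b i"
  shows "a = b"
proof -
  have "length a = length b"
  proof (rule ccontr)
    assume ne: "length a \<noteq> length b"
    define l where "l = max (length a) (length b)"
    have "1 \<le> l" "l \<le> N" using ne assms(3,4) by (auto simp: l_def)
    then have "part a l = part b l" by (rule parts)
    then show False
      using ne part_eq_0_iff[OF assms(1), of l] part_eq_0_iff[OF assms(2), of l]
      by (auto simp: l_def max_def split: if_splits)
  qed
  moreover have "a ! k = b ! k" if "k < length a" for k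
    using parts[of "k + 1"] that assms(3) \<open>length a = length b\<close> by (simp add: part_nth)
  ultimately show ?thesis by (simp add: nth_equalityI)
qed

lemma is_partitionI:
  assumes "\<And>i j. 1 \<le> i \<Longrightarrow> i \<le> j \<Longrightarrow> j \<le> length xs \<Longrightarrow> part xs j \<le> part xs i"
    and "\<And>i. 1 \<le> i \<Longrightarrow> i \<le> length xs \<Longrightarrow> part xs i \<noteq> 0"
  shows "is_partition xs"
proof -
  have "sorted_wrt (\<ge>) xs"
    unfolding sorted_wrt_iff_nth_less
    using assms(1)[of "i + 1" "j + 1" for i j] by (auto simp: part_nth)
  moreover have "0 \<notin> set xs"
    using assms(2)[of "k + 1" for k] by (auto simp: in_set_conv_nth part_nth)
  ultimately show ?thesis by (simp add: is_partition_def)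
qed

lemma is_partition_ConsD: "is_partition (x # xs) \<Longrightarrow> is_partition xs"
  by (simp add: is_partition_def)

lemma is_partition_filter_nonzero:
  "sorted_wrt (\<ge>) xs \<Longrightarrow> is_partition (filter (\<lambda>x. x \<noteq> 0) xs)"
  by (simp add: is_partition_def sorted_wrt_filter)

lemma part_filter_nonzero:
  "sorted_wrt (\<ge>) xs \<Longrightarrow> part (filter (\<lambda>x. x \<noteq> 0) xs) i = part xs (i::nat)"
proof (induction xs arbitrary: i)
  case (Cons x xs)
  show ?case
  proof (cases "x = 0")
    case True
    then have zero: "\<forall>a\<in>set (x # xs). a = 0" using Cons.prems by auto
    then have "part (x # xs) i = 0"
      unfolding part_def using nth_mem[of "i - 1" "x # xs"] by auto
    then show ?thesis using zero by (simp add: filter_empty_conv)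
  next
    case False
    then show ?thesis using Cons by (simp add: part_Cons)
  qed
qed simp

definition partition_of :: "(nat \<Rightarrow> nat) \<Rightarrow> nat \<Rightarrow> nat list" where
  "partition_of f n = filter (\<lambda>x. x \<noteq> 0) (map f [1..<n + 1])"

lemma sorted_map_upt:
  "antimono_on {1..n} f \<Longrightarrow> sorted_wrt (\<ge>) (map f [1..<n + 1])"
  by (auto simp: sorted_wrt_iff_nth_less monotone_on_def simp del: upt_Suc)

lemma is_partition_partition_of:
  "antimono_on {1..n} f \<Longrightarrow> is_partition (partition_of f n)"
  unfolding partition_of_def by (intro is_partition_filter_nonzero sorted_map_upt)

lemma length_partition_of_le: "length (partition_of f n) \<le> n"
proof -
  have "length (partition_of f n) \<le> length (map f [1..<n + 1])"
    unfolding partition_of_def by (rule length_filter_le)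
  then show ?thesis by (simp del: upt_Suc)
qed

lemma part_partition_of:
  assumes "antimono_on {1..n} f" "1 \<le> i"
  shows "part (partition_of f n) i = (if i \<le> n then f i else 0)"
proof -
  have "part (map f [1..<n + 1]) i = (if i \<le> n then f i else 0)"
    using assms(2) by (auto simp: part_def simp del: upt_Suc)
  then show ?thesis
    unfolding partition_of_def part_filter_nonzero[OF sorted_map_upt[OF assms(1)]] .
qed

lemma length_padd: "length (padd a b) = max (length a) (length b)"
  unfolding padd_def by (simp del: upt_Suc)

lemma part_padd: "part (padd a b) i = part a i + part b i"
  by (auto simp: part_def padd_def length_padd simp del: upt_Suc)

lemma padd_partition:
  assumes "is_partition a" "is_partition b"
  shows "is_partition (padd a b)"
proof (rule is_partitionI)
  show "part (padd a b) j \<le> part (padd a b) i" if "1 \<le> i" "i \<le> j" for i j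
    using part_antimono[OF assms(1) that] part_antimono[OF assms(2) that] by (simp add: part_padd)
  show "part (padd a b) i \<noteq> 0" if "1 \<le> i" "i \<le> length (padd a b)" for i
    using that part_eq_0_iff[OF assms(1), of i] part_eq_0_iff[OF assms(2), of i]
    by (auto simp: part_padd length_padd)
qed

lemma length_filter_mono:
  "(\<And>x. P x \<Longrightarrow> Q x) \<Longrightarrow> length (filter P xs) \<le> length (filter Q xs)"
  by (induction xs) auto

lemma length_conj: "length (conj xs) = part xs 1"
  unfolding conj_def by (simp del: upt_Suc)

lemma part_conj:
  assumes "is_partition xs" "1 \<le> j"
  shows "part (conj xs) j = length (filter (\<lambda>a. j \<le> a) xs)"
proof (cases "j \<le> part xs 1")
  case True
  then have "part (conj xs) j = conj xs ! (j - 1)"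
    using assms(2) by (simp add: part_nth length_conj)
  also have "\<dots> = length (filter (\<lambda>a. j \<le> a) xs)"
    unfolding conj_def using True assms(2)
    by (subst nth_map) (auto simp del: upt_Suc)
  finally show ?thesis .
next
  case False
  then have "filter (\<lambda>a. j \<le> a) xs = []"
    using part_le_part_1[OF assms(1)] by (fastforce simp: filter_empty_conv)
  then show ?thesis using False by (simp add: part_beyond length_conj)
qed

lemma conj_partition:
  assumes "is_partition xs"
  shows "is_partition (conj xs)"
proof (rule is_partitionI)
  show "part (conj xs) j \<le> part (conj xs) i" if "1 \<le> i" "i \<le> j" for i j
    using that by (simp add: part_conj[OF assms] length_filter_mono)
  show "part (conj xs) j \<noteq> 0" if "1 \<le> j" "j \<le> length (conj xs)" for j
  proof -
    have "xs \<noteq> []" using that by (auto simp: length_conj)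
    then have "part xs 1 \<in> set xs" by (cases xs) (simp_all add: part_Cons)
    then have "part xs 1 \<in> set (filter (\<lambda>a. j \<le> a) xs)"
      using that by (simp add: length_conj)
    then have "filter (\<lambda>a. j \<le> a) xs \<noteq> []" by force
    then show ?thesis using that by (simp add: part_conj[OF assms])
  qed
qed

lemma length_filter_ge_le_iff:
  assumes "is_partition b" "1 \<le> j"
  shows "length (filter (\<lambda>a. j \<le> a) b) \<le> m \<longleftrightarrow> part b (Suc m) < j"
  using assms(1)
proof (induction b arbitrary: m)
  case (Cons x xs)
  note xs = is_partition_ConsD[OF Cons.prems]
  show ?case
  proof (cases "j \<le> x")
    case True
    then show ?thesis using Cons.IH[OF xs, of "m - 1"] by (cases m) (auto simp: part_Cons)
  next
    case False
    have "\<forall>a\<in>set xs. a \<le> x" using Cons.prems by (simp add: is_partition_def)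
    then have "filter (\<lambda>a. j \<le> a) xs = []" using False by (auto simp: filter_empty_conv)
    moreover have "part (x # xs) (Suc m) \<le> x"
      using part_antimono[OF Cons.prems, of 1 "Suc m"] by (simp add: part_Cons)
    ultimately show ?thesis using False by simp
  qed
qed (use assms(2) in simp)

lemma length_filter_greater_upt: "length (filter (\<lambda>j. r < j) [1..<q + 1]) = q - (r::nat)"
proof -
  have "length (filter (\<lambda>j. r < j) [1..<q + 1]) = card ({j. r < j} \<inter> set [1..<q + 1])"
    by (rule distinct_length_filter) simp
  also have "{j. r < j} \<inter> set [1..<q + 1] = {r + 1..<q + 1}" by auto
  finally show ?thesis by simp
qed

definition complement_columns :: "nat \<Rightarrow> nat list \<Rightarrow> nat list" where
  "complement_columns N b = filter (\<lambda>x. x \<noteq> 0) (map (\<lambda>x. N - x) (rev (conj b)))"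

lemma pbar_eq_conj: "b \<noteq> [] \<Longrightarrow> pbar N b = conj (complement_columns N b)"
  by (simp add: pbar_def complement_columns_def)

lemma is_partition_complement_columns:
  assumes "is_partition b"
  shows "is_partition (complement_columns N b)"
  unfolding complement_columns_def
proof (rule is_partition_filter_nonzero)
  have "sorted_wrt (\<ge>) (conj b)" using conj_partition[OF assms] by (simp add: is_partition_def)
  then show "sorted_wrt (\<ge>) (map (\<lambda>x. N - x) (rev (conj b)))"
    unfolding sorted_wrt_map sorted_wrt_rev by (rule sorted_wrt_mono_rel[rotated]) auto
qed

lemma pbar_Nil [simp]: "pbar N [] = []"
  by (simp add: pbar_def)

lemma pbar_partition: "is_partition b \<Longrightarrow> is_partition (pbar N b)"
  using conj_partition[OF is_partition_complement_columns] pbar_eq_conj by (cases "b = []") auto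

lemma part_le_if_all_le: "\<forall>a\<in>set xs. a \<le> N \<Longrightarrow> part xs i \<le> N"
  by (auto simp: part_def)

lemma length_pbar_le: "length (pbar N b) \<le> N"
proof (cases "b = []")
  case False
  have "length (pbar N b) = part (complement_columns N b) 1"
    unfolding pbar_eq_conj[OF False] length_conj ..
  also have "\<dots> \<le> N" by (rule part_le_if_all_le) (auto simp: complement_columns_def)
  finally show ?thesis .
qed simp

lemma part_pbar:
  assumes b: "is_partition b" and i: "1 \<le> i" "i \<le> N"
  shows "part (pbar N b) i = part b 1 - part b (N + 1 - i)"
proof (cases "b = []")
  case False
  let ?q = "part b 1"
  have "part (pbar N b) i = length (filter (\<lambda>a. i \<le> a) (complement_columns N b))"
    using False part_conj[OF is_partition_complement_columns[OF b] i(1)] by (simp add: pbar_eq_conj)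
  also have "\<dots> = length (filter (\<lambda>a. i \<le> N - a) (conj b))"
  proof -
    have "filter (\<lambda>a. i \<le> a) (complement_columns N b) = filter (\<lambda>a. i \<le> a) (map (\<lambda>x. N - x) (rev (conj b)))"
      unfolding complement_columns_def filter_filter using i(1) by (intro filter_cong) auto
    then show ?thesis by (simp add: filter_map comp_def rev_filter[symmetric])
  qed
  also have "\<dots> = length (filter (\<lambda>j. i \<le> N - length (filter (\<lambda>a. j \<le> a) b)) [1..<?q + 1])"
    unfolding conj_def filter_map by (simp add: comp_def del: upt_Suc)
  also have "filter (\<lambda>j. i \<le> N - length (filter (\<lambda>a. j \<le> a) b)) [1..<?q + 1]
      = filter (\<lambda>j. part b (N + 1 - i) < j) [1..<?q + 1]"
  proof (rule filter_cong[OF refl])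
    fix j assume "j \<in> set [1..<?q + 1]"
    then have "1 \<le> j" by (simp del: upt_Suc)
    have "i \<le> N - length (filter (\<lambda>a. j \<le> a) b) \<longleftrightarrow> length (filter (\<lambda>a. j \<le> a) b) \<le> N - i"
      using i by linarith
    also have "\<dots> \<longleftrightarrow> part b (N + 1 - i) < j"
      using length_filter_ge_le_iff[OF b \<open>1 \<le> j\<close>, of "N - i"] i by (simp add: Suc_diff_le)
    finally show "(i \<le> N - length (filter (\<lambda>a. j \<le> a) b)) = (part b (N + 1 - i) < j)" .
  qed
  also have "length \<dots> = ?q - part b (N + 1 - i)" by (rule length_filter_greater_upt)
  finally show ?thesis .
qed simp

lemma Lambda_iff_disjoint_parts:
  "(m, n) \<in> Lambda N \<longleftrightarrow> is_partition m \<and> is_partition n \<and> length m \<le> N \<and> length n \<le> N \<and>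
     (\<forall>i. part m i = 0 \<or> part n (N + 1 - i) = 0)" (is "_ \<longleftrightarrow> ?disjoint")
proof
  assume "(m, n) \<in> Lambda N"
  then have m: "is_partition m" and n: "is_partition n" and len: "length m + length n \<le> N"
    by (auto simp: Lambda_def)
  have "part m i = 0 \<or> part n (N + 1 - i) = 0" for i
    using len part_eq_0_iff[OF m, of i] part_eq_0_iff[OF n, of "N + 1 - i"] by linarith
  then show ?disjoint using m n len by auto
next
  assume ?disjoint
  then have m: "is_partition m" and n: "is_partition n" and len: "length m \<le> N" "length n \<le> N"
    and disjoint: "\<And>i. part m i = 0 \<or> part n (N + 1 - i) = 0"
    by auto
  have "length m + length n \<le> N"
  proof (cases "m = []")
    case False
    then have "part m (length m) \<noteq> 0" using part_eq_0_iff[OF m] by simp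
    then have "part n (N + 1 - length m) = 0" using disjoint[of "length m"] by simp
    then show ?thesis using part_eq_0_iff[OF n] len(1) by simp
  qed (simp add: len)
  then show "(m, n) \<in> Lambda N" using m n by (simp add: Lambda_def)
qed

lemma equiv_srel: "equiv (parts_le N \<times> UNIV) (srel N)"
proof (rule equivI)
  show "refl_on (parts_le N \<times> UNIV) (srel N)" by (auto simp: refl_on_def srel_def)
  show "srel N \<subseteq> (parts_le N \<times> UNIV) \<times> (parts_le N \<times> UNIV)" by (auto simp: srel_def)
  show "sym (srel N)" by (auto simp: sym_def srel_def)
  show "trans (srel N)"
  proof (rule transI)
    fix x y z assume "(x, y) \<in> srel N" "(y, z) \<in> srel N"
    then show "(x, z) \<in> srel N" by (fastforce simp: srel_def)
  qed
qed

lemma sclass_eq_iff: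
  assumes "a \<in> parts_le N" "b \<in> parts_le N"
  shows "sclass N a t = sclass N b u \<longleftrightarrow>
    (\<forall>i\<in>{1..N}. int (part a i) - int t = int (part b i) - int u)"
proof -
  have "sclass N a t = sclass N b u \<longleftrightarrow> ((a, t), (b, u)) \<in> srel N"
    unfolding sclass_def using assms by (intro eq_equiv_class_iff[OF equiv_srel]) auto
  also have "\<dots> \<longleftrightarrow> (\<forall>i\<in>{1..N}. int (part a i) - int t = int (part b i) - int u)"
    using assms by (auto simp: srel_def)
  finally show ?thesis .
qed

lemma Sset_iff: "X \<in> Sset N \<longleftrightarrow> (\<exists>a t. a \<in> parts_le N \<and> X = sclass N a t)"
  unfolding Sset_def quotient_def sclass_def by auto

lemma padd_pbar_in_parts_le:
  assumes "(m, n) \<in> Lambda N"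
  shows "padd m (pbar N n) \<in> parts_le N"
  using assms padd_partition pbar_partition length_pbar_le[of N n]
  by (auto simp: Lambda_def parts_le_def length_padd)

lemma frak_s_in_Sset: "x \<in> Lambda N \<Longrightarrow> frak_s N x \<in> Sset N"
  by (cases x) (auto simp: frak_s_def Sset_iff intro: padd_pbar_in_parts_le)

lemma part_padd_pbar_shift:
  assumes "is_partition n" "1 \<le> i" "i \<le> N"
  shows "int (part (padd m (pbar N n)) i) - int (part n 1)
    = int (part m i) - int (part n (N + 1 - i))"
proof -
  have "part n (N + 1 - i) \<le> part n 1"
    using part_antimono[OF assms(1), of 1 "N + 1 - i"] assms(3) by simp
  then show ?thesis by (simp add: part_padd part_pbar[OF assms] of_nat_diff)
qed

lemma frak_s_eq_sclass_iff:
  assumes "(m, n) \<in> Lambda N" "a \<in> parts_le N"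
  shows "frak_s N (m, n) = sclass N a t \<longleftrightarrow>
    (\<forall>i\<in>{1..N}. int (part m i) - int (part n (N + 1 - i)) = int (part a i) - int t)"
    (is "_ \<longleftrightarrow> ?rhs")
proof -
  have n: "is_partition n" using assms(1) by (simp add: Lambda_def)
  have "frak_s N (m, n) = sclass N a t \<longleftrightarrow> (\<forall>i\<in>{1..N}.
      int (part (padd m (pbar N n)) i) - int (part n 1) = int (part a i) - int t)"
    unfolding frak_s_def using sclass_eq_iff[OF padd_pbar_in_parts_le[OF assms(1)] assms(2)]
    by simp
  also have "\<dots> \<longleftrightarrow> ?rhs"
  proof (intro ball_cong refl)
    fix i assume "i \<in> {1..N}"
    then show "int (part (padd m (pbar N n)) i) - int (part n 1) = int (part a i) - int t \<longleftrightarrow>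
        int (part m i) - int (part n (N + 1 - i)) = int (part a i) - int t"
      using part_padd_pbar_shift[OF n, of i N m] by simp
  qed
  finally show ?thesis .
qed

lemma nat_diff_decomposition_unique:
  fixes x y x' y' :: nat
  assumes "x = 0 \<or> y = 0" "x' = 0 \<or> y' = 0" "int x - int y = int x' - int y'"
  shows "x = x' \<and> y = y'"
  using assms by auto

lemma Lambda_eqI:
  assumes mn: "(m, n) \<in> Lambda N" and mn': "(m', n') \<in> Lambda N"
    and eq: "\<forall>i\<in>{1..N}. int (part m i) - int (part n (N + 1 - i))
      = int (part m' i) - int (part n' (N + 1 - i))"
  shows "(m, n) = (m', n')"
proof -
  note mn = mn[unfolded Lambda_iff_disjoint_parts] and mn' = mn'[unfolded Lambda_iff_disjoint_parts]
  have parts_eq: "part m i = part m' i \<and> part n (N + 1 - i) = part n' (N + 1 - i)"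
    if "i \<in> {1..N}" for i
  proof (rule nat_diff_decomposition_unique)
    show "part m i = 0 \<or> part n (N + 1 - i) = 0" using mn by simp
    show "part m' i = 0 \<or> part n' (N + 1 - i) = 0" using mn' by simp
    show "int (part m i) - int (part n (N + 1 - i)) = int (part m' i) - int (part n' (N + 1 - i))"
      using eq that by blast
  qed
  have "m = m'"
    using mn mn' parts_eq by (intro partition_eqI[of m m' N]) auto
  moreover have "n = n'"
  proof (rule partition_eqI[of n n' N])
    fix k assume "1 \<le> k" "k \<le> N"
    then have "N + 1 - k \<in> {1..N}" by auto
    then show "part n k = part n' k" using parts_eq[of "N + 1 - k"] \<open>k \<le> N\<close> by simp
  qed (use mn mn' in auto)
  ultimately show ?thesis by simp
qed

lemma frak_s_inj: "inj_on (frak_s N) (Lambda N)"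
proof (rule inj_onI)
  fix x y assume x: "x \<in> Lambda N" and y: "y \<in> Lambda N" and eq: "frak_s N x = frak_s N y"
  obtain m n m' n' where xy: "x = (m, n)" "y = (m', n')" by fastforce
  note x = x[unfolded xy] and y = y[unfolded xy]
  define a where "a = padd m' (pbar N n')"
  have a: "a \<in> parts_le N" unfolding a_def using y by (rule padd_pbar_in_parts_le)
  have y_class: "frak_s N (m', n') = sclass N a (part n' 1)" by (simp add: frak_s_def a_def)
  then have x_class: "frak_s N (m, n) = sclass N a (part n' 1)" using eq xy by simp
  have "\<forall>i\<in>{1..N}. int (part m i) - int (part n (N + 1 - i)) = int (part a i) - int (part n' 1)"
    using x_class frak_s_eq_sclass_iff[OF x a] by blast
  moreover have "\<forall>i\<in>{1..N}. int (part m' i) - int (part n' (N + 1 - i)) = int (part a i) - int (part n' 1)"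
    using y_class frak_s_eq_sclass_iff[OF y a] by blast
  ultimately show "x = y" unfolding xy using x y by (intro Lambda_eqI) auto
qed

lemma sclass_in_frak_s_image:
  assumes "a \<in> parts_le N"
  shows "sclass N a t \<in> frak_s N ` Lambda N"
proof -
  have a: "is_partition a" using assms by (simp add: parts_le_def)
  define f where "f i = part a i - t" for i
  define g where "g k = t - part a (N + 1 - k)" for k
  define m where "m = partition_of f N"
  define n where "n = partition_of g N"
  have f: "antimono_on {1..N} f"
  proof (rule monotone_onI)
    fix i j assume "i \<in> {1..N}" "j \<in> {1..N}" "i \<le> j"
    then show "f j \<le> f i" unfolding f_def using part_antimono[OF a, of i j] by simp
  qed
  have g: "antimono_on {1..N} g"
  proof (rule monotone_onI)
    fix k l assume "k \<in> {1..N}" "l \<in> {1..N}" "k \<le> l"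
    then have "part a (N + 1 - k) \<le> part a (N + 1 - l)"
      using part_antimono[OF a, of "N + 1 - l" "N + 1 - k"] by simp
    then show "g l \<le> g k" unfolding g_def by (rule diff_le_mono2)
  qed
  have part_m: "part m i = (if i \<in> {1..N} then part a i - t else 0)" for i
    using part_partition_of[OF f, of i] by (cases "i = 0") (simp_all add: m_def f_def)
  have part_n: "part n (N + 1 - i) = (if i \<in> {1..N} then t - part a i else 0)" if "1 \<le> i" for i
    using part_partition_of[OF g, of "N + 1 - i"] that by (cases "i \<le> N") (simp_all add: n_def g_def)
  have "part m i = 0 \<or> part n (N + 1 - i) = 0" for i
    using part_m[of i] part_n[of i] by (cases "i = 0") auto
  then have mn: "(m, n) \<in> Lambda N"
    using is_partition_partition_of[OF f] is_partition_partition_of[OF g] length_partition_of_le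
    by (simp add: Lambda_iff_disjoint_parts m_def n_def)
  have "\<forall>i\<in>{1..N}. int (part m i) - int (part n (N + 1 - i)) = int (part a i) - int t"
    using part_m part_n by auto
  then have "frak_s N (m, n) = sclass N a t" using frak_s_eq_sclass_iff[OF mn assms] by blast
  then show ?thesis using mn by (metis image_eqI)
qed

theorem lemma1p1:
  fixes N :: nat
  assumes "N \<ge> 1"
  shows "bij_betw (frak_s N) (Lambda N) (Sset N)"
proof (rule bij_betw_imageI)
  show "inj_on (frak_s N) (Lambda N)" by (rule frak_s_inj)
  show "frak_s N ` Lambda N = Sset N"
  proof
    show "frak_s N ` Lambda N \<subseteq> Sset N" using frak_s_in_Sset by blast
    show "Sset N \<subseteq> frak_s N ` Lambda N"
    proof
      fix X assume "X \<in> Sset N"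
      then obtain a t where "a \<in> parts_le N" "X = sclass N a t" by (auto simp: Sset_iff)
      then show "X \<in> frak_s N ` Lambda N" using sclass_in_frak_s_image by simp
    qed
  qed
qed

end
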